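(* Let $X$ be a Banach space with a closed subspace $Z$ such that $Z$ and $X/Z$ are SCD spaces. Then $X$ is an SCD space.
   Context: A slice of a convex bounded set $A$ in a Banach space is $S(A,x^*,\varepsilon)=\{x\in A:\ \mathrm{Re}\,x^*(x)>\sup\mathrm{Re}\,x^*(A)-\varepsilon\}$ with $x^*$ in the dual and $\varepsilon>0$. A convex bounded $A$ is an SCD set if there is a sequence $(S_n)$ of slices of $A$ such that $A\subseteq\overline{\mathrm{conv}}(B)$ for every $B\subseteq A$ intersecting every $S_n$. A separable Banach space is an SCD space if every convex bounded subset of it is an SCD set. *)

theory Defs
  imports "HOL-Analysis.Analysis"
begin

definition dual_functional_on :: "'a::real_normed_vector set \<Rightarrow> ('a \<Rightarrow> real) \<Rightarrow> bool" where
  "dual_functional_on S f \<longleftrightarrow>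
     (\<forall>x\<in>S. \<forall>y\<in>S. f (x + y) = f x + f y) \<and>
     (\<forall>x\<in>S. \<forall>c::real. f (c *\<^sub>R x) = c * f x) \<and>
     (\<exists>K. \<forall>x\<in>S. \<bar>f x\<bar> \<le> K * norm x)"

definition slice :: "'a set \<Rightarrow> ('a \<Rightarrow> real) \<Rightarrow> real \<Rightarrow> 'a set" where
  "slice A f \<epsilon> = {x \<in> A. f x > Sup (f ` A) - \<epsilon>}"

definition SCD_set_in :: "'a::real_normed_vector set \<Rightarrow> 'a set \<Rightarrow> bool" where
  "SCD_set_in S A \<longleftrightarrow>
     (\<exists>f :: nat \<Rightarrow> 'a \<Rightarrow> real. \<exists>\<epsilon> :: nat \<Rightarrow> real.
        (\<forall>n. dual_functional_on S (f n) \<and> \<epsilon> n > 0) \<and>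
        (\<forall>B. B \<subseteq> A \<longrightarrow> (\<forall>n. B \<inter> slice A (f n) (\<epsilon> n) \<noteq> {}) \<longrightarrow>
              A \<subseteq> closure (convex hull B)))"

definition SCD_space_on :: "'a::real_normed_vector set \<Rightarrow> bool" where
  "SCD_space_on S \<longleftrightarrow>
     separable_space (top_of_set S) \<and>
     (\<forall>A. A \<subseteq> S \<longrightarrow> convex A \<longrightarrow> bounded A \<longrightarrow> SCD_set_in S A)"

abbreviation SCD_space :: "'a::real_normed_vector itself \<Rightarrow> bool" where
  "SCD_space _ \<equiv> SCD_space_on (UNIV :: 'a set)"

end

theory Submission
  imports Defs
begin

(* Let A be a convex bounded subset of X. For d in a countable dense set, R > 0 rational and
   an SCD slice sequence H_m of the convex bounded set E = {z \<in> Z. dist (d + z) A < R} (extended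
   to X by Hahn-Banach), the quotient images of the parts {x \<in> A. \<theta> + H_m d < H_m x} (\<theta> rational)
   are SCD in X/Z with slices g_k. This yields countably many sets, each defined by two
   functionals H_m and g_k \<circ> Q. By Bourgain's lemma in the plane, each of them is met by the convex
   hull of any subset of A meeting finitely many suitable slices of A; and a convex C \<subseteq> A meeting
   all of them is dense in A: lifting approximations from X/Z through the quotient norm shows that
   {z \<in> Z. dist (d + z) C < R} meets every slice H_m of E, so it has 0 in its closure and C comes
   within 2R of d. *)

section \<open>Hahn-Banach extension\<close>

(* A maximal (Zorn) graph of a linear extension of h dominated by K * norm is total. *)
definition dominated_graph :: "real \<Rightarrow> 'a::real_normed_vector set \<Rightarrow> ('a \<Rightarrow> real) \<Rightarrow> ('a \<times> real) set \<Rightarrow> bool" where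
  "dominated_graph K Z h G \<longleftrightarrow>
     subspace G \<and> (\<forall>(x, r)\<in>G. r \<le> K * norm x) \<and> (\<forall>z\<in>Z. (z, h z) \<in> G)"

lemma dominated_graph_functional:
  assumes "dominated_graph K Z h G" "(x, r) \<in> G" "(x, s) \<in> G"
  shows "r = s"
proof -
  have sub: "subspace G" and dom: "\<And>x r. (x, r) \<in> G \<Longrightarrow> r \<le> K * norm x"
    using assms(1) unfolding dominated_graph_def by auto
  have "(0, r - s) \<in> G" using subspace_diff[OF sub assms(2,3)] by simp
  moreover have "(0, s - r) \<in> G" using subspace_diff[OF sub assms(3,2)] by simp
  ultimately show ?thesis using dom[of 0 "r - s"] dom[of 0 "s - r"] by simp
qed

lemma dominated_graph_gap:
  assumes "dominated_graph K Z h G" "K \<ge> 0"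
  obtains c where "\<And>m r. (m, r) \<in> G \<Longrightarrow> r - K * norm (m - x0) \<le> c"
    and "\<And>m r. (m, r) \<in> G \<Longrightarrow> c \<le> K * norm (m + x0) - r"
proof -
  have sub: "subspace G" and dom: "\<And>x r. (x, r) \<in> G \<Longrightarrow> r \<le> K * norm x"
    using assms(1) unfolding dominated_graph_def by auto
  have key: "r1 - K * norm (m1 - x0) \<le> K * norm (m2 + x0) - r2"
    if "(m1, r1) \<in> G" "(m2, r2) \<in> G" for m1 r1 m2 r2
  proof -
    have "r1 + r2 \<le> K * norm (m1 + m2)" using dom subspace_add[OF sub that] by simp
    also have "\<dots> \<le> K * (norm (m1 - x0) + norm (m2 + x0))"
      using norm_triangle_ineq[of "m1 - x0" "m2 + x0"] assms(2) by (simp add: mult_left_mono)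
    finally show ?thesis by (simp add: algebra_simps)
  qed
  define S where "S = (\<lambda>(m, r). r - K * norm (m - x0)) ` G"
  have "(0, 0) \<in> G" using subspace_0[OF sub] by (simp add: zero_prod_def)
  then have ne: "S \<noteq> {}" and bdd: "bdd_above S"
    unfolding S_def bdd_above_def using key by fastforce+
  show ?thesis
  proof (rule that[of "Sup S"])
    fix m r assume "(m, r) \<in> G"
    then show "r - K * norm (m - x0) \<le> Sup S"
      using cSup_upper[OF _ bdd] unfolding S_def by force
    show "Sup S \<le> K * norm (m + x0) - r"
      using cSup_least[OF ne] key[OF _ \<open>(m, r) \<in> G\<close>] unfolding S_def by force
  qed
qed

lemma dominated_graph_one_step:
  assumes G: "dominated_graph K Z h G" and "K \<ge> 0"
  obtains c where "\<And>m s t. (m, s) \<in> G \<Longrightarrow> s + t * c \<le> K * norm (m + t *\<^sub>R x0)"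
proof -
  have sub: "subspace G" and dom: "\<And>x r. (x, r) \<in> G \<Longrightarrow> r \<le> K * norm x"
    using G unfolding dominated_graph_def by auto
  obtain c where c_lower: "\<And>m r. (m, r) \<in> G \<Longrightarrow> r - K * norm (m - x0) \<le> c"
    and c_upper: "\<And>m r. (m, r) \<in> G \<Longrightarrow> c \<le> K * norm (m + x0) - r"
    using dominated_graph_gap[OF G \<open>K \<ge> 0\<close>] by blast
  have "s + t * c \<le> K * norm (m + t *\<^sub>R x0)" if "(m, s) \<in> G" for m s t
  proof (cases "t = 0")
    case True then show ?thesis using dom that by simp
  next
    case False
    define u where "u = \<bar>t\<bar>"
    have "u > 0" using False u_def by simp
    have scaled: "(m /\<^sub>R u, s / u) \<in> G"
      using subspace_scale[OF sub that, of "inverse u"] by (simp add: divide_inverse mult.commute)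
    show ?thesis
    proof (cases "t > 0")
      case True
      then have t: "t = u" using u_def by simp
      have "norm (m + t *\<^sub>R x0) = norm (u *\<^sub>R (m /\<^sub>R u + x0))"
        using \<open>u > 0\<close> by (simp add: t scaleR_add_right)
      then have norm_eq: "norm (m + t *\<^sub>R x0) = u * norm (m /\<^sub>R u + x0)"
        using \<open>u > 0\<close> by simp
      have "s + t * c \<le> s + u * (K * norm (m /\<^sub>R u + x0) - s / u)"
        using c_upper[OF scaled] \<open>u > 0\<close> by (simp add: t)
      also have "\<dots> = K * norm (m + t *\<^sub>R x0)"
        using \<open>u > 0\<close> by (simp add: norm_eq field_simps)
      finally show ?thesis .
    next
      case False
      then have t: "t = - u" using u_def by simp
      have "norm (m + t *\<^sub>R x0) = norm (u *\<^sub>R (m /\<^sub>R u - x0))"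
        using \<open>u > 0\<close> by (simp add: t scaleR_diff_right)
      then have norm_eq: "norm (m + t *\<^sub>R x0) = u * norm (m /\<^sub>R u - x0)"
        using \<open>u > 0\<close> by simp
      have "s + t * c \<le> s - u * (s / u - K * norm (m /\<^sub>R u - x0))"
        using c_lower[OF scaled] \<open>u > 0\<close> by (simp add: t)
      also have "\<dots> = K * norm (m + t *\<^sub>R x0)"
        using \<open>u > 0\<close> by (simp add: norm_eq field_simps)
      finally show ?thesis .
    qed
  qed
  then show ?thesis by (rule that)
qed

lemma dominated_graph_extend:
  assumes G: "dominated_graph K Z h G" and "K \<ge> 0" and x0: "\<forall>r. (x0, r) \<notin> G"
  obtains G' where "dominated_graph K Z h G'" and "G \<subset> G'"
proof -
  have sub: "subspace G" using G unfolding dominated_graph_def by auto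
  obtain c where bound: "\<And>m s t. (m, s) \<in> G \<Longrightarrow> s + t * c \<le> K * norm (m + t *\<^sub>R x0)"
    using dominated_graph_one_step[OF G \<open>K \<ge> 0\<close>] by blast
  define G' where "G' = {p + q | p q. p \<in> G \<and> q \<in> span {(x0, c)}}"
  have "subspace G'"
    unfolding G'_def by (rule subspace_sums[OF sub subspace_span])
  moreover have "\<forall>(x, r)\<in>G'. r \<le> K * norm x"
    unfolding G'_def span_singleton using bound by auto
  moreover have "G \<subseteq> G'"
    unfolding G'_def by (metis (mono_tags, lifting) add.right_neutral mem_Collect_eq span_zero subsetI)
  moreover have "(x0, c) \<in> G' - G"
    unfolding G'_def using x0 subspace_0[OF sub] span_base[of "(x0, c)" "{(x0, c)}"]
    by (metis (mono_tags, lifting) DiffI add_0 insertI1 mem_Collect_eq)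
  ultimately show ?thesis
    using G that[of G'] unfolding dominated_graph_def by blast
qed

lemma dominated_graph_Union:
  assumes "\<C> \<noteq> {}" and "\<And>G. G \<in> \<C> \<Longrightarrow> dominated_graph K Z h G"
    and "\<And>G H. G \<in> \<C> \<Longrightarrow> H \<in> \<C> \<Longrightarrow> G \<subseteq> H \<or> H \<subseteq> G"
  shows "dominated_graph K Z h (\<Union>\<C>)"
  unfolding dominated_graph_def subspace_def
proof (intro conjI ballI allI)
  obtain G where "G \<in> \<C>" using assms(1) by blast
  then show "0 \<in> \<Union>\<C>" and "\<And>z. z \<in> Z \<Longrightarrow> (z, h z) \<in> \<Union>\<C>"
    using assms(2)[of G] unfolding dominated_graph_def by (auto dest: subspace_0)
next
  fix p q assume "p \<in> \<Union>\<C>" "q \<in> \<Union>\<C>"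
  then obtain G H where "p \<in> G" "q \<in> H" "G \<in> \<C>" "H \<in> \<C>" by blast
  then show "p + q \<in> \<Union>\<C>"
    using assms(2)[of G] assms(2)[of H] assms(3)[of G H] unfolding dominated_graph_def
    by (meson UnionI subsetD subspace_add)
next
  fix a p assume "p \<in> \<Union>\<C>"
  then show "a *\<^sub>R p \<in> \<Union>\<C>"
    using assms(2) unfolding dominated_graph_def by (meson UnionE UnionI subspace_scale)
next
  fix p assume "p \<in> \<Union>\<C>"
  then show "case p of (x, r) \<Rightarrow> r \<le> K * norm x"
    using assms(2) unfolding dominated_graph_def by blast
qed

lemma dominated_graph_total_imp_extension:
  assumes G: "dominated_graph K Z h G" and total: "\<And>x. \<exists>r. (x, r) \<in> G"
  shows "\<exists>g. bounded_linear g \<and> (\<forall>z\<in>Z. g z = h z)"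
proof -
  define g where "g x = (SOME r. (x, r) \<in> G)" for x
  have gG: "(x, g x) \<in> G" for x
    unfolding g_def using total by (rule someI_ex)
  have sub: "subspace G" and dom: "\<And>x r. (x, r) \<in> G \<Longrightarrow> r \<le> K * norm x"
    using G unfolding dominated_graph_def by auto
  have add: "g (x + y) = g x + g y" for x y
  proof -
    have "(x + y, g x + g y) \<in> G" using subspace_add[OF sub gG gG] by simp
    then show ?thesis using dominated_graph_functional[OF G gG] by blast
  qed
  have scale: "g (c *\<^sub>R x) = c * g x" for c x
  proof -
    have "(c *\<^sub>R x, c * g x) \<in> G" using subspace_scale[OF sub gG] by simp
    then show ?thesis using dominated_graph_functional[OF G gG] by blast
  qed
  have "\<bar>g x\<bar> \<le> K * norm x" for x
    using dom[OF gG[of x]] dom[OF gG[of "- x"]] scale[of "-1" x] by simp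
  then have "bounded_linear g"
    using add scale by (intro bounded_linear_intro[of g K]) (auto simp: abs_le_iff mult.commute)
  moreover have "g z = h z" if "z \<in> Z" for z
    using dominated_graph_functional[OF G gG] G that unfolding dominated_graph_def by blast
  ultimately show ?thesis by blast
qed

lemma dominated_graph_of_functional:
  assumes "subspace Z" and "dual_functional_on Z h"
  obtains K where "K \<ge> 0" and "dominated_graph K Z h ((\<lambda>z. (z, h z)) ` Z)"
proof -
  obtain K0 where add: "\<And>x y. x \<in> Z \<Longrightarrow> y \<in> Z \<Longrightarrow> h (x + y) = h x + h y"
    and scale: "\<And>x c. x \<in> Z \<Longrightarrow> h (c *\<^sub>R x) = c * h x"
    and bound: "\<And>x. x \<in> Z \<Longrightarrow> \<bar>h x\<bar> \<le> K0 * norm x"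
    using assms(2) unfolding dual_functional_on_def by blast
  define K where "K = max K0 0"
  have "\<bar>h x\<bar> \<le> K * norm x" if "x \<in> Z" for x
    using bound[OF that] mult_right_mono[of K0 K "norm x"] by (simp add: K_def)
  moreover have "subspace ((\<lambda>z. (z, h z)) ` Z)"
    unfolding subspace_def
  proof (intro conjI ballI allI)
    show "0 \<in> (\<lambda>z. (z, h z)) ` Z"
      using scale[of 0 0] subspace_0[OF assms(1)] by (force simp: zero_prod_def)
    show "p + q \<in> (\<lambda>z. (z, h z)) ` Z" if "p \<in> (\<lambda>z. (z, h z)) ` Z" "q \<in> (\<lambda>z. (z, h z)) ` Z" for p q
      using that add subspace_add[OF assms(1)] by (auto intro!: image_eqI)
    show "c *\<^sub>R p \<in> (\<lambda>z. (z, h z)) ` Z" if "p \<in> (\<lambda>z. (z, h z)) ` Z" for c p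
      using that scale subspace_scale[OF assms(1)] by (auto intro!: image_eqI)
  qed
  ultimately have "dominated_graph K Z h ((\<lambda>z. (z, h z)) ` Z)"
    unfolding dominated_graph_def by (auto simp: abs_le_iff)
  then show ?thesis by (intro that) (simp_all add: K_def)
qed

theorem hahn_banach_extension:
  fixes Z :: "'a::real_normed_vector set"
  assumes "subspace Z" and "dual_functional_on Z h"
  shows "\<exists>g. bounded_linear g \<and> (\<forall>z\<in>Z. g z = h z)"
proof -
  obtain K where "K \<ge> 0" and "dominated_graph K Z h ((\<lambda>z. (z, h z)) ` Z)"
    using dominated_graph_of_functional[OF assms] .
  then have "\<exists>U\<in>{G. dominated_graph K Z h G}. \<forall>G\<in>\<C>. G \<subseteq> U"
    if "\<C> \<in> chains {G. dominated_graph K Z h G}" for \<C>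
  proof (cases "\<C> = {}")
    case False
    then have "dominated_graph K Z h (\<Union>\<C>)"
      using that dominated_graph_Union[of \<C> K Z h] unfolding chains_def chain_subset_def by blast
    then show ?thesis by blast
  qed blast
  then have "\<exists>M\<in>{G. dominated_graph K Z h G}. \<forall>G\<in>{G. dominated_graph K Z h G}. M \<subseteq> G \<longrightarrow> G = M"
    by (intro Zorn_Lemma2 ballI)
  then obtain M where M: "dominated_graph K Z h M"
    and maximal: "\<And>G. dominated_graph K Z h G \<Longrightarrow> M \<subseteq> G \<Longrightarrow> G = M"
    by blast
  have "\<exists>r. (x, r) \<in> M" for x
  proof (rule ccontr)
    assume "\<nexists>r. (x, r) \<in> M"
    then obtain G where "dominated_graph K Z h G" "M \<subset> G"
      using dominated_graph_extend[OF M \<open>K \<ge> 0\<close>, of x] by blast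
    then show False using maximal by blast
  qed
  then show ?thesis by (rule dominated_graph_total_imp_extension[OF M])
qed

section \<open>Slices and SCD sets\<close>

lemma dual_functional_on_UNIV_iff: "dual_functional_on UNIV f \<longleftrightarrow> bounded_linear f"
proof
  assume "dual_functional_on UNIV f"
  then obtain K where "\<And>x y. f (x + y) = f x + f y" "\<And>c x. f (c *\<^sub>R x) = c * f x"
    "\<And>x. \<bar>f x\<bar> \<le> K * norm x"
    unfolding dual_functional_on_def by auto
  then show "bounded_linear f"
    by (intro bounded_linear_intro[of f K]) (auto simp: abs_le_iff mult.commute)
next
  assume "bounded_linear f"
  then interpret bounded_linear f .
  obtain K where "\<And>x. norm (f x) \<le> norm x * K" using bounded by blast
  then show "dual_functional_on UNIV f"
    unfolding dual_functional_on_def by (auto simp: add scaleR mult.commute intro!: exI[of _ K])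
qed

lemma slice_cong: "(\<And>x. x \<in> A \<Longrightarrow> f x = g x) \<Longrightarrow> slice A f \<epsilon> = slice A g \<epsilon>"
  unfolding slice_def by (metis (no_types, lifting) Collect_cong image_cong)

lemma slice_nonempty:
  assumes "A \<noteq> {}" and "bdd_above (f ` A)" and "\<epsilon> > 0"
  shows "slice A f \<epsilon> \<noteq> {}"
proof -
  have "Sup (f ` A) - \<epsilon> < Sup (f ` A)" using \<open>\<epsilon> > 0\<close> by simp
  then obtain x where "x \<in> A" "Sup (f ` A) - \<epsilon> < f x"
    using less_cSup_iff[of "f ` A"] assms(1,2) by auto
  then show ?thesis unfolding slice_def by blast
qed

definition slices_determine :: "'a::real_normed_vector set \<Rightarrow> (nat \<Rightarrow> 'a \<Rightarrow> real) \<Rightarrow> (nat \<Rightarrow> real) \<Rightarrow> bool" where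
  "slices_determine A f \<epsilon> \<longleftrightarrow>
     (\<forall>B. B \<subseteq> A \<longrightarrow> (\<forall>n. B \<inter> slice A (f n) (\<epsilon> n) \<noteq> {}) \<longrightarrow> A \<subseteq> closure (convex hull B))"

lemma SCD_set_in_iff:
  "SCD_set_in S A \<longleftrightarrow> (\<exists>f \<epsilon>. (\<forall>n. dual_functional_on S (f n) \<and> \<epsilon> n > 0) \<and> slices_determine A f \<epsilon>)"
  unfolding SCD_set_in_def slices_determine_def ..

lemma SCD_set_in_UNIV_iff:
  "SCD_set_in UNIV A \<longleftrightarrow> (\<exists>f \<epsilon>. (\<forall>n. bounded_linear (f n) \<and> \<epsilon> n > 0) \<and> slices_determine A f \<epsilon>)"
  unfolding SCD_set_in_iff dual_functional_on_UNIV_iff ..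

lemma slices_determine_convex:
  assumes "slices_determine A f \<epsilon>" and "convex B" and "B \<subseteq> A"
    and "\<And>n. B \<inter> slice A (f n) (\<epsilon> n) \<noteq> {}"
  shows "A \<subseteq> closure B"
proof -
  have "A \<subseteq> closure (convex hull B)"
    using assms(1,3,4) unfolding slices_determine_def by simp
  then show ?thesis using \<open>convex B\<close> by (simp add: hull_same)
qed

lemma SCD_set_in_UNIV_if_subspace:
  fixes Z :: "'a::real_normed_vector set"
  assumes "subspace Z" and "E \<subseteq> Z" and "SCD_set_in Z E"
  shows "SCD_set_in UNIV E"
proof -
  obtain h :: "nat \<Rightarrow> 'a \<Rightarrow> real" and \<epsilon> where h\<epsilon>: "\<forall>n. dual_functional_on Z (h n) \<and> \<epsilon> n > 0"
    and determine: "slices_determine E h \<epsilon>"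
    using assms(3) unfolding SCD_set_in_iff by blast
  have "\<forall>n. \<exists>g. bounded_linear g \<and> (\<forall>z\<in>Z. g z = h n z)"
    using hahn_banach_extension[OF assms(1)] h\<epsilon> by blast
  then obtain g where g: "\<And>n. bounded_linear (g n)" "\<And>n z. z \<in> Z \<Longrightarrow> g n z = h n z"
    unfolding choice_iff by blast
  have "slice E (g n) (\<epsilon> n) = slice E (h n) (\<epsilon> n)" for n
    using g(2) assms(2) by (intro slice_cong) blast
  then have "slices_determine E g \<epsilon>"
    using determine unfolding slices_determine_def by simp
  then show ?thesis
    unfolding SCD_set_in_UNIV_iff using g(1) h\<epsilon> by blast
qed

lemma SCD_set_in_UNIV_if_countable_slices:
  fixes A :: "'a::real_normed_vector set"
  assumes "countable S" and good: "\<forall>(f, e)\<in>S. bounded_linear f \<and> e > 0"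
    and determine: "\<And>B. B \<subseteq> A \<Longrightarrow> \<forall>(f, e)\<in>S. B \<inter> slice A f e \<noteq> {} \<Longrightarrow> A \<subseteq> closure (convex hull B)"
  shows "SCD_set_in UNIV A"
proof -
  (* The trivial slice A itself only serves to make the family nonempty. *)
  define S' where "S' = insert (\<lambda>x. 0, 1) S"
  have "countable S'" "S' \<noteq> {}"
    unfolding S'_def using \<open>countable S\<close> by auto
  then have S': "S' = range (from_nat_into S')"
    by (simp add: range_from_nat_into)
  define f where "f n = fst (from_nat_into S' n)" for n
  define \<epsilon> where "\<epsilon> n = snd (from_nat_into S' n)" for n
  have "\<forall>(g, e)\<in>S'. bounded_linear g \<and> e > 0"
    unfolding S'_def using good by (auto simp: bounded_linear_zero)
  then have "bounded_linear (f n) \<and> \<epsilon> n > 0" for n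
    using S' unfolding f_def \<epsilon>_def by (auto simp: case_prod_unfold)
  moreover have "A \<subseteq> closure (convex hull B)"
    if B: "B \<subseteq> A" "\<forall>n. B \<inter> slice A (f n) (\<epsilon> n) \<noteq> {}" for B
  proof (rule determine[OF B(1)])
    have "B \<inter> slice A g e \<noteq> {}" if "(g, e) \<in> S'" for g e
    proof -
      from that obtain n where n: "from_nat_into S' n = (g, e)"
        by (subst (asm) S') (auto simp: image_iff)
      show ?thesis using B(2)[rule_format, of n] unfolding f_def \<epsilon>_def n by simp
    qed
    then show "\<forall>(g, e)\<in>S. B \<inter> slice A g e \<noteq> {}"
      unfolding S'_def by auto
  qed
  ultimately show ?thesis
    unfolding SCD_set_in_UNIV_iff slices_determine_def by blast
qed

definition slice_forced :: "'a::real_normed_vector set \<Rightarrow> 'a set \<Rightarrow> bool" where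
  "slice_forced A V \<longleftrightarrow> (\<exists>T. finite T \<and> (\<forall>(f, e)\<in>T. bounded_linear f \<and> e > 0) \<and>
     (\<forall>B\<subseteq>A. (\<forall>(f, e)\<in>T. B \<inter> slice A f e \<noteq> {}) \<longrightarrow> convex hull B \<inter> V \<noteq> {}))"

lemma SCD_set_in_UNIV_if_slice_forced:
  fixes A :: "'a::real_normed_vector set"
  assumes "convex A" and "countable \<V>" and forced: "\<And>V. V \<in> \<V> \<Longrightarrow> slice_forced A V"
    and dense: "\<And>C. C \<subseteq> A \<Longrightarrow> convex C \<Longrightarrow> (\<forall>V\<in>\<V>. C \<inter> V \<noteq> {}) \<Longrightarrow> A \<subseteq> closure C"
  shows "SCD_set_in UNIV A"
proof -
  have "\<forall>V\<in>\<V>. \<exists>T. finite T \<and> (\<forall>(f, e)\<in>T. bounded_linear f \<and> e > 0) \<and>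
      (\<forall>B\<subseteq>A. (\<forall>(f, e)\<in>T. B \<inter> slice A f e \<noteq> {}) \<longrightarrow> convex hull B \<inter> V \<noteq> {})"
    using forced unfolding slice_forced_def by simp
  from bchoice[OF this] obtain T where T: "\<forall>V\<in>\<V>. finite (T V) \<and> (\<forall>(f, e)\<in>T V. bounded_linear f \<and> e > 0) \<and>
      (\<forall>B\<subseteq>A. (\<forall>(f, e)\<in>T V. B \<inter> slice A f e \<noteq> {}) \<longrightarrow> convex hull B \<inter> V \<noteq> {})" ..
  show ?thesis
  proof (rule SCD_set_in_UNIV_if_countable_slices)
    show "countable (\<Union>V\<in>\<V>. T V)"
      using \<open>countable \<V>\<close> T by (auto intro: countable_finite)
    show "\<forall>(f, e)\<in>(\<Union>V\<in>\<V>. T V). bounded_linear f \<and> e > 0"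
      using T by auto
    fix B assume B: "B \<subseteq> A" and hit: "\<forall>(f, e)\<in>(\<Union>V\<in>\<V>. T V). B \<inter> slice A f e \<noteq> {}"
    show "A \<subseteq> closure (convex hull B)"
    proof (rule dense)
      show "convex hull B \<subseteq> A" using B \<open>convex A\<close> by (simp add: hull_minimal)
      show "\<forall>V\<in>\<V>. convex hull B \<inter> V \<noteq> {}"
      proof
        fix V assume "V \<in> \<V>"
        then have "\<forall>(f, e)\<in>T V. B \<inter> slice A f e \<noteq> {}" using hit by auto
        then show "convex hull B \<inter> V \<noteq> {}" using T \<open>V \<in> \<V>\<close> B by simp
      qed
    qed simp
  qed
qed

section \<open>Bourgain's lemma in finite dimension\<close>

lemma slice_compose: "slice A (\<lambda>x. g (F x)) \<epsilon> = A \<inter> F -` slice (F ` A) g \<epsilon>"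
  unfolding slice_def by (auto simp: image_image)

lemma Sup_image_ge_closure:
  fixes f :: "'a::topological_space \<Rightarrow> real"
  assumes "continuous_on (closure P) f" and "bdd_above (f ` P)" and "e \<in> closure P"
  shows "f e \<le> Sup (f ` P)"
proof -
  have "f ` closure P \<subseteq> {..Sup (f ` P)}"
    using assms(1,2) by (intro image_closure_subset) (auto intro: cSup_upper)
  then show ?thesis using assms(3) by auto
qed

(* A weak form of denting point: e need not belong to P. *)
definition denting_point :: "'e::real_inner set \<Rightarrow> 'e \<Rightarrow> bool" where
  "denting_point P e \<longleftrightarrow> (\<forall>\<eta>>0. \<exists>w \<delta>. \<delta> > 0 \<and> slice P (inner w) \<delta> \<subseteq> ball e \<eta>)"

lemma denting_point_if_farthest:
  fixes P :: "'e::real_inner set"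
  assumes "bounded P" and "e \<in> closure P" and farthest: "\<And>x. x \<in> P \<Longrightarrow> dist c x \<le> dist c e"
  shows "denting_point P e"
  unfolding denting_point_def
proof (intro allI impI)
  fix \<eta> :: real assume "\<eta> > 0"
  define w where "w = e - c"
  have Sup_ge: "inner w e \<le> Sup (inner w ` P)"
    using assms(1,2) by (intro Sup_image_ge_closure continuous_intros bounded_imp_bdd_above
        bounded_linear_image bounded_linear_inner_right) auto
  have "dist e x < \<eta>" if "x \<in> slice P (inner w) (\<eta>\<^sup>2 / 2)" for x
  proof -
    have x: "x \<in> P" "Sup (inner w ` P) - \<eta>\<^sup>2 / 2 < inner w x"
      using that unfolding slice_def by auto
    have "(norm (x - c))\<^sup>2 \<le> (norm w)\<^sup>2"
      using farthest[OF x(1)] by (simp add: dist_norm norm_minus_commute w_def power_mono)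
    then have "inner (x - c) (x - c) \<le> inner w w"
      by (simp add: power2_norm_eq_inner)
    moreover have "(dist e x)\<^sup>2 = inner (x - c) (x - c) - 2 * inner w (x - c) + inner w w"
      by (simp add: dist_norm power2_norm_eq_inner w_def algebra_simps inner_diff_left inner_diff_right inner_commute)
    moreover have "inner w (x - c) = inner w x - inner w e + inner w w"
      by (simp add: inner_diff_right w_def)
    ultimately have "(dist e x)\<^sup>2 < \<eta>\<^sup>2"
      using x(2) Sup_ge by linarith
    then show ?thesis using \<open>\<eta> > 0\<close> by (simp add: power_less_imp_less_base)
  qed
  moreover have "\<eta>\<^sup>2 / 2 > 0" using \<open>\<eta> > 0\<close> by simp
  ultimately show "\<exists>w \<delta>. \<delta> > 0 \<and> slice P (inner w) \<delta> \<subseteq> ball e \<eta>"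
    by (intro exI[of _ w] exI[of _ "\<eta>\<^sup>2 / 2"]) auto
qed

lemma power2_norm_diff: "(norm (x - y))\<^sup>2 = (norm x)\<^sup>2 + (norm y)\<^sup>2 - 2 * inner x y"
  by (simp add: power2_norm_eq_inner inner_diff_left inner_diff_right inner_commute)

(* If p were separated from the hull, a point of closure P farthest from a centre far beyond p
   in the normal direction would be denting, hence beyond the hyperplane, but no farther from
   the centre than p. *)
lemma subset_closure_convex_hull_denting_points:
  fixes P :: "'e::euclidean_space set"
  assumes "bounded P"
  shows "P \<subseteq> closure (convex hull {e. denting_point P e})"
proof
  fix p assume "p \<in> P"
  show "p \<in> closure (convex hull {e. denting_point P e})"
  proof (rule ccontr)
    assume "p \<notin> closure (convex hull {e. denting_point P e})"
    then obtain a b where ab: "inner a p < b"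
      and beyond: "\<forall>x\<in>closure (convex hull {e. denting_point P e}). b < inner a x"
      using separating_hyperplane_closed_point[OF convex_closure[OF convex_convex_hull] closed_closure]
      by blast
    have separated: "b < inner a e" if "denting_point P e" for e
    proof -
      have "e \<in> convex hull {e. denting_point P e}" using that by (intro hull_inc) simp
      then show ?thesis using beyond closure_subset by (meson subsetD)
    qed
    obtain D where D: "\<And>x. x \<in> closure P \<Longrightarrow> norm (x - p) \<le> D"
      using bounded_closure[OF assms] unfolding bounded_any_center[where a = p]
      by (auto simp: dist_norm norm_minus_commute)
    define gap where "gap = b - inner a p"
    define t where "t = D\<^sup>2 / (2 * gap) + 1"
    have "gap > 0" "t > 0" using ab by (simp_all add: gap_def t_def add_nonneg_pos)
    have "2 * t * gap = D\<^sup>2 + 2 * gap" using \<open>gap > 0\<close> by (simp add: t_def field_simps)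
    define c where "c = p + t *\<^sub>R a"
    obtain e where e: "e \<in> closure P" and farthest: "\<And>x. x \<in> closure P \<Longrightarrow> dist c x \<le> dist c e"
      using distance_attains_sup[of "closure P" c] \<open>p \<in> P\<close> assms by (auto simp: compact_closure)
    then have "denting_point P e"
      using assms closure_subset by (intro denting_point_if_farthest) auto
    then have "gap < inner a (e - p)"
      using separated by (simp add: gap_def inner_diff_right)
    then have "2 * t * gap < 2 * t * inner a (e - p)"
      using \<open>t > 0\<close> by simp
    have "(norm (t *\<^sub>R a))\<^sup>2 \<le> (norm ((e - p) - t *\<^sub>R a))\<^sup>2"
      using farthest[of p] \<open>p \<in> P\<close> closure_subset unfolding c_def dist_norm
      by (intro power_mono) (auto simp: algebra_simps norm_minus_commute)
    then have "2 * t * inner a (e - p) \<le> (norm (e - p))\<^sup>2"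
      by (simp add: power2_norm_diff inner_commute)
    also have "\<dots> \<le> D\<^sup>2"
      using D[OF e] by (simp add: power_mono)
    finally show False
      using \<open>2 * t * gap < 2 * t * inner a (e - p)\<close> \<open>2 * t * gap = D\<^sup>2 + 2 * gap\<close> \<open>gap > 0\<close>
      by linarith
  qed
qed

lemma dist_convex_combination_le:
  fixes x y :: "'i \<Rightarrow> 'a::real_normed_vector"
  assumes "finite s" and "\<forall>e\<in>s. 0 \<le> u e" and "sum u s = 1"
    and "\<And>e. e \<in> s \<Longrightarrow> dist (x e) (y e) \<le> \<rho>"
  shows "dist (\<Sum>e\<in>s. u e *\<^sub>R x e) (\<Sum>e\<in>s. u e *\<^sub>R y e) \<le> \<rho>"
proof -
  have "dist (\<Sum>e\<in>s. u e *\<^sub>R x e) (\<Sum>e\<in>s. u e *\<^sub>R y e) = norm (\<Sum>e\<in>s. u e *\<^sub>R (x e - y e))"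
    by (simp add: dist_norm sum_subtractf scaleR_diff_right)
  also have "\<dots> \<le> (\<Sum>e\<in>s. u e * \<rho>)"
    using assms(2,4) by (intro order_trans[OF norm_sum sum_mono]) (simp add: dist_norm mult_left_mono)
  also have "\<dots> = \<rho>" using assms(3) by (simp flip: sum_distrib_right)
  finally show ?thesis .
qed

(* F x1 is close to a convex combination of denting points of F ` A, each isolated by a slice. *)
lemma slice_forced_vimage_open:
  fixes F :: "'a::real_normed_vector \<Rightarrow> 'e::euclidean_space"
  assumes "bounded A" and F: "bounded_linear F" and "open U" and "x1 \<in> A" and "F x1 \<in> U"
  shows "slice_forced A (F -` U)"
proof -
  obtain \<rho> where "\<rho> > 0" and ball_U: "ball (F x1) (2 * \<rho>) \<subseteq> U"
    using \<open>open U\<close> \<open>F x1 \<in> U\<close> by (metis open_contains_ball_eq field_sum_of_halves mult_2 half_gt_zero)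
  define P where "P = F ` A"
  have "bounded P" unfolding P_def using bounded_linear_image[OF assms(1) F] .
  then have "F x1 \<in> closure (convex hull {e. denting_point P e})"
    using subset_closure_convex_hull_denting_points \<open>x1 \<in> A\<close> unfolding P_def by blast
  then obtain y where "y \<in> convex hull {e. denting_point P e}" and "dist y (F x1) < \<rho>"
    using \<open>\<rho> > 0\<close> closure_approachable by blast
  then obtain s u where s: "finite s" "s \<subseteq> {e. denting_point P e}"
    and u: "\<forall>e\<in>s. 0 \<le> u e" "sum u s = 1" "(\<Sum>e\<in>s. u e *\<^sub>R e) = y"
    unfolding convex_hull_explicit by blast
  have "\<forall>e\<in>s. \<exists>w\<delta>. snd w\<delta> > 0 \<and> slice P (inner (fst w\<delta>)) (snd w\<delta>) \<subseteq> ball e \<rho>"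
    using s(2) \<open>\<rho> > 0\<close> unfolding denting_point_def by auto
  then obtain w\<delta> where w\<delta>: "\<And>e. e \<in> s \<Longrightarrow> snd (w\<delta> e) > 0"
    "\<And>e. e \<in> s \<Longrightarrow> slice P (inner (fst (w\<delta> e))) (snd (w\<delta> e)) \<subseteq> ball e \<rho>"
    by (metis bchoice)
  define T where "T = (\<lambda>e. (\<lambda>x. inner (fst (w\<delta> e)) (F x), snd (w\<delta> e))) ` s"
  have "convex hull B \<inter> F -` U \<noteq> {}"
    if "B \<subseteq> A" and hit: "\<forall>(f, \<epsilon>)\<in>T. B \<inter> slice A f \<epsilon> \<noteq> {}" for B
  proof -
    have "\<forall>e\<in>s. \<exists>b\<in>B. b \<in> slice A (\<lambda>x. inner (fst (w\<delta> e)) (F x)) (snd (w\<delta> e))"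
      using hit unfolding T_def by auto
    then obtain b where b: "\<And>e. e \<in> s \<Longrightarrow> b e \<in> B"
      "\<And>e. e \<in> s \<Longrightarrow> F (b e) \<in> slice P (inner (fst (w\<delta> e))) (snd (w\<delta> e))"
      unfolding slice_compose P_def by (metis IntE bchoice vimageE)
    define x where "x = (\<Sum>e\<in>s. u e *\<^sub>R b e)"
    have "x \<in> convex hull B"
      unfolding x_def using s(1) u b(1) by (intro convex_sum convex_convex_hull) (auto intro: hull_inc)
    have "F x = (\<Sum>e\<in>s. u e *\<^sub>R F (b e))"
      unfolding x_def by (simp add: linear_sum[OF bounded_linear.linear[OF F]] linear_scale[OF bounded_linear.linear[OF F]])
    moreover have "dist (F (b e)) e \<le> \<rho>" if "e \<in> s" for e
      using w\<delta>(2)[OF that] b(2)[OF that] by (force simp: dist_commute)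
    ultimately have "dist (F x) y \<le> \<rho>"
      unfolding u(3)[symmetric] using s(1) u(1,2) by (simp add: dist_convex_combination_le)
    then have "F x \<in> ball (F x1) (2 * \<rho>)"
      using \<open>dist y (F x1) < \<rho>\<close> dist_triangle[of "F x" "F x1" y] by (simp add: dist_commute)
    then show ?thesis using \<open>x \<in> convex hull B\<close> ball_U by blast
  qed
  moreover have "finite T" and "\<forall>(f, \<epsilon>)\<in>T. bounded_linear f \<and> \<epsilon> > 0"
    unfolding T_def using s(1) w\<delta>(1) bounded_linear_compose[OF bounded_linear_inner_right F]
    by auto
  ultimately show ?thesis unfolding slice_forced_def by blast
qed

section \<open>Quotient maps\<close>

definition quotient_map :: "'a::real_normed_vector set \<Rightarrow> ('a \<Rightarrow> 'b::real_normed_vector) \<Rightarrow> bool" where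
  "quotient_map Z Q \<longleftrightarrow> bounded_linear Q \<and> surj Q \<and> (\<forall>x. Q x = 0 \<longleftrightarrow> x \<in> Z) \<and>
     (\<forall>y. norm y = Inf {norm x | x. Q x = y})"

lemma quotient_map_lift:
  assumes "quotient_map Z Q" and "norm y < \<gamma>"
  shows "\<exists>x. Q x = y \<and> norm x < \<gamma>"
proof -
  have "surj Q" using assms(1) unfolding quotient_map_def by blast
  then have "{norm x | x. Q x = y} \<noteq> {}" by (metis (mono_tags, lifting) empty_iff mem_Collect_eq surjD)
  moreover have "bdd_below {norm x | x. Q x = y}"
    by (rule bdd_belowI[of _ 0]) auto
  moreover have "Inf {norm x | x. Q x = y} < \<gamma>"
    using assms unfolding quotient_map_def by simp
  ultimately show ?thesis by (auto simp: cInf_less_iff)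
qed

lemma quotient_map_near_kernel:
  assumes Q: "quotient_map Z Q" and "dist (Q u) (Q v) < \<gamma>"
  shows "\<exists>z\<in>Z. norm (u - v - z) < \<gamma>"
proof -
  obtain w where w: "Q w = Q u - Q v" "norm w < \<gamma>"
    using quotient_map_lift[OF Q] assms(2) by (metis dist_norm)
  have "linear Q" using Q unfolding quotient_map_def by (simp add: bounded_linear.linear)
  then have "Q (u - v - w) = 0" by (simp add: linear_diff w(1))
  then have "u - v - w \<in> Z" using Q unfolding quotient_map_def by blast
  then show ?thesis using w(2) by (intro bexI[of _ "u - v - w"]) simp_all
qed

lemma separable_space_if_quotient_map:
  fixes Q :: "'a::real_normed_vector \<Rightarrow> 'b::real_normed_vector"
  assumes Q: "quotient_map Z Q"
    and "separable_space (top_of_set Z)" and "separable_space (top_of_set (UNIV :: 'b set))"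
  shows "separable_space (top_of_set (UNIV :: 'a set))"
proof -
  obtain Cz where "countable Cz" and Cz: "Z \<subseteq> closure Cz"
    using assms(2) unfolding separable_space_def by (auto simp: closure_of_subtopology)
  obtain Cy :: "'b set" where "countable Cy" and Cy: "closure Cy = UNIV"
    using assms(3) unfolding separable_space_def by auto
  obtain L where L: "\<And>y. Q (L y) = y"
    using Q unfolding quotient_map_def by (metis surj_f_inv_f)
  define D where "D = (\<lambda>(y, z). L y + z) ` (Cy \<times> Cz)"
  have "x \<in> closure D" for x
    unfolding closure_approachable
  proof (intro allI impI)
    fix \<epsilon> :: real assume "\<epsilon> > 0"
    obtain y where "y \<in> Cy" "dist y (Q x) < \<epsilon> / 2"
      using Cy \<open>\<epsilon> > 0\<close> closure_approachable[of "Q x" Cy] by (metis UNIV_I half_gt_zero)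
    then obtain z where "z \<in> Z" and z: "norm (x - L y - z) < \<epsilon> / 2"
      using quotient_map_near_kernel[OF Q] L by (metis dist_commute)
    then obtain z' where "z' \<in> Cz" "dist z' z < \<epsilon> / 2"
      using Cz \<open>\<epsilon> > 0\<close> closure_approachable[of z Cz] by (metis half_gt_zero subsetD)
    moreover have "dist (L y + z') x \<le> dist z' z + norm (x - L y - z)"
      using norm_triangle_ineq4[of "z' - z" "x - L y - z"] by (simp add: dist_norm algebra_simps)
    ultimately show "\<exists>d\<in>D. dist d x < \<epsilon>"
      using \<open>y \<in> Cy\<close> z unfolding D_def by (intro bexI[of _ "L y + z'"]) force+
  qed
  moreover have "countable D"
    unfolding D_def using \<open>countable Cy\<close> \<open>countable Cz\<close> by simp
  ultimately show ?thesis
    unfolding separable_space_def by (intro exI[of _ D]) auto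
qed

section \<open>The three-space property\<close>

(* The convex bounded subsets of Z through which the SCD property of Z enters. *)
definition section_nbhd :: "'a::real_normed_vector set \<Rightarrow> 'a set \<Rightarrow> 'a \<Rightarrow> real \<Rightarrow> 'a set" where
  "section_nbhd Z A d R = {z \<in> Z. \<exists>x\<in>A. norm (d + z - x) < R}"

lemma section_nbhd_mono: "C \<subseteq> A \<Longrightarrow> section_nbhd Z C d R \<subseteq> section_nbhd Z A d R"
  unfolding section_nbhd_def by blast

lemma convex_section_nbhd:
  assumes "subspace Z" and "convex A"
  shows "convex (section_nbhd Z A d R)"
proof -
  have "{z. \<exists>x\<in>A. norm (d + z - x) < R} = (\<lambda>p. p - d) ` (\<Union>x\<in>A. \<Union>v\<in>ball 0 R. {x + v})"
  proof (intro set_eqI iffI)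
    fix z assume "z \<in> {z. \<exists>x\<in>A. norm (d + z - x) < R}"
    then obtain x where "x \<in> A" "norm (d + z - x) < R" by blast
    then have "d + z \<in> (\<Union>v\<in>ball 0 R. {x + v})"
      by (intro UN_I[of "d + z - x"]) (simp_all add: dist_norm norm_minus_commute)
    then have "d + z \<in> (\<Union>x\<in>A. \<Union>v\<in>ball 0 R. {x + v})"
      using \<open>x \<in> A\<close> by blast
    then show "z \<in> (\<lambda>p. p - d) ` (\<Union>x\<in>A. \<Union>v\<in>ball 0 R. {x + v})"
      by (rule rev_image_eqI) simp
  next
    fix z assume "z \<in> (\<lambda>p. p - d) ` (\<Union>x\<in>A. \<Union>v\<in>ball 0 R. {x + v})"
    then obtain x v where "x \<in> A" "norm v < R" "z = x + v - d" by auto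
    moreover have "d + z - x = v" using \<open>z = x + v - d\<close> by simp
    ultimately show "z \<in> {z. \<exists>x\<in>A. norm (d + z - x) < R}"
      unfolding mem_Collect_eq by (intro bexI[of _ x]) simp_all
  qed
  moreover have "convex (\<Union>x\<in>A. \<Union>v\<in>ball 0 R. {x + v})"
    using \<open>convex A\<close> by (intro convex_sums convex_ball)
  ultimately have "convex {z. \<exists>x\<in>A. norm (d + z - x) < R}"
    by simp
  moreover have "section_nbhd Z A d R = Z \<inter> {z. \<exists>x\<in>A. norm (d + z - x) < R}"
    unfolding section_nbhd_def by blast
  ultimately show ?thesis
    using subspace_imp_convex[OF \<open>subspace Z\<close>] by (simp add: convex_Int)
qed

lemma bounded_section_nbhd:
  assumes "bounded A"
  shows "bounded (section_nbhd Z A d R)"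
proof -
  obtain M where M: "\<And>x. x \<in> A \<Longrightarrow> norm x \<le> M" using assms unfolding bounded_iff by blast
  have "norm z \<le> R + M + norm d" if z: "z \<in> section_nbhd Z A d R" for z
  proof -
    obtain x where "x \<in> A" "norm (d + z - x) < R" using z unfolding section_nbhd_def by blast
    moreover have "norm z \<le> norm (d + z - x) + norm x + norm d"
      using norm_triangle_ineq4[of "d + z - x + x" d] norm_triangle_ineq[of "d + z - x" x] by simp
    ultimately show ?thesis using M[of x] by linarith
  qed
  then show ?thesis unfolding bounded_iff by blast
qed

lemma zero_in_section_nbhd:
  assumes "subspace Z" and "a \<in> A" and "dist d a < R"
  shows "0 \<in> section_nbhd Z A d R"
proof -
  have "norm (d + 0 - a) < R" using assms(3) by (simp add: dist_norm)
  then show ?thesis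
    using assms(2) subspace_0[OF assms(1)] unfolding section_nbhd_def by blast
qed

lemma close_point_if_zero_in_closure_section_nbhd:
  assumes "0 \<in> closure (section_nbhd Z C d R)" and "R > 0"
  shows "\<exists>c\<in>C. dist c d < 2 * R"
proof -
  obtain y where y: "y \<in> section_nbhd Z C d R" "dist y 0 < R"
    using assms closure_approachable[of 0] by blast
  then obtain c where "c \<in> C" "norm (d + y - c) < R"
    unfolding section_nbhd_def by blast
  moreover have "dist c d \<le> norm (d + y - c) + norm y"
    using norm_triangle_ineq4[of "d + y - c" y] by (simp add: dist_norm norm_minus_commute algebra_simps)
  ultimately show ?thesis using y(2) by force
qed

(* Approximating Q x0 by Q c with c \<in> C and lifting, c - x0 differs from some z1 \<in> Z by a small
   vector; then z0 + z1 works. *)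
lemma exists_section_nbhd_above:
  fixes Q :: "'a::real_normed_vector \<Rightarrow> 'b::real_normed_vector" and H :: "'a \<Rightarrow> real"
  assumes Q: "quotient_map Z Q" and "subspace Z" and H: "bounded_linear H"
    and approx: "\<And>\<theta>. \<theta> \<in> \<rat> \<Longrightarrow> Q ` {x\<in>A. \<theta> + H d < H x} \<subseteq> closure (Q ` {x\<in>C. \<theta> + H d < H x})"
    and z0: "z0 \<in> section_nbhd Z A d R" and "\<sigma> > 0"
  shows "\<exists>z\<in>section_nbhd Z C d R. H z0 - \<sigma> < H z"
proof -
  obtain x0 where "z0 \<in> Z" "x0 \<in> A" and x0: "norm (d + z0 - x0) < R"
    using z0 unfolding section_nbhd_def by blast
  obtain K where "K > 0" and K: "\<And>x. norm (H x) \<le> norm x * K"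
    using bounded_linear.pos_bounded[OF H] by blast
  obtain \<theta> where "\<theta> \<in> \<rat>" and \<theta>: "H x0 - H d - \<sigma> / 2 < \<theta>" "\<theta> < H x0 - H d"
    using Rats_dense_in_real[of "H x0 - H d - \<sigma> / 2" "H x0 - H d"] \<open>\<sigma> > 0\<close> by auto
  define \<gamma> where "\<gamma> = min (R - norm (d + z0 - x0)) (\<sigma> / (2 * K))"
  have "\<gamma> > 0" using x0 \<open>\<sigma> > 0\<close> \<open>K > 0\<close> by (simp add: \<gamma>_def)
  have "x0 \<in> {x\<in>A. \<theta> + H d < H x}" using \<open>x0 \<in> A\<close> \<theta>(2) by simp
  then have "Q x0 \<in> closure (Q ` {x\<in>C. \<theta> + H d < H x})"
    using approx[OF \<open>\<theta> \<in> \<rat>\<close>] by blast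
  then obtain y where "y \<in> Q ` {x\<in>C. \<theta> + H d < H x}" "dist y (Q x0) < \<gamma>"
    using closure_approachable \<open>\<gamma> > 0\<close> by blast
  then obtain c where "c \<in> C" and c: "\<theta> + H d < H c" and "dist (Q c) (Q x0) < \<gamma>"
    by blast
  then obtain z1 where "z1 \<in> Z" and w: "norm (c - x0 - z1) < \<gamma>"
    using quotient_map_near_kernel[OF Q] by blast
  define w where "w = c - x0 - z1"
  have "linear H" using H by (simp add: bounded_linear.linear)
  have "z0 + z1 \<in> section_nbhd Z C d R"
  proof -
    have "norm (d + (z0 + z1) - c) \<le> norm (d + z0 - x0) + norm w"
      using norm_triangle_ineq4[of "d + z0 - x0" w] by (simp add: w_def algebra_simps)
    then have "norm (d + (z0 + z1) - c) < R" using w by (simp add: \<gamma>_def w_def)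
    then show ?thesis
      using \<open>c \<in> C\<close> \<open>z0 \<in> Z\<close> \<open>z1 \<in> Z\<close> subspace_add[OF \<open>subspace Z\<close>]
      unfolding section_nbhd_def by blast
  qed
  moreover have "H w \<le> \<sigma> / 2"
  proof -
    have "H w \<le> norm w * K" using K[of w] by simp
    also have "\<dots> \<le> \<gamma> * K" using w \<open>K > 0\<close> by (simp add: w_def)
    also have "\<dots> \<le> \<sigma> / (2 * K) * K" using \<open>K > 0\<close> by (intro mult_right_mono) (simp_all add: \<gamma>_def)
    also have "\<dots> = \<sigma> / 2" using \<open>K > 0\<close> by simp
    finally show ?thesis .
  qed
  moreover have "H (z0 + z1) = H z0 + H c - H x0 - H w"
    by (simp add: w_def linear_add[OF \<open>linear H\<close>] linear_diff[OF \<open>linear H\<close>])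
  ultimately show ?thesis using c \<theta>(1) by (intro bexI[of _ "z0 + z1"]) auto
qed

lemma subset_closure_if_section_nbhds_dense:
  assumes "subspace Z" and "closure D = UNIV"
    and dense: "\<And>d R. d \<in> D \<Longrightarrow> R \<in> \<rat> \<Longrightarrow> R > 0 \<Longrightarrow>
      section_nbhd Z A d R \<subseteq> closure (section_nbhd Z C d R)"
  shows "A \<subseteq> closure C"
proof
  fix a assume "a \<in> A"
  show "a \<in> closure C"
    unfolding closure_approachable
  proof (intro allI impI)
    fix \<epsilon> :: real assume "\<epsilon> > 0"
    then obtain R where "R \<in> \<rat>" "0 < R" "R < \<epsilon> / 3"
      using Rats_dense_in_real[of 0 "\<epsilon> / 3"] by auto
    moreover obtain d where "d \<in> D" "dist d a < R"
      using \<open>closure D = UNIV\<close> \<open>0 < R\<close> closure_approachable[of a D] by auto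
    ultimately have "0 \<in> closure (section_nbhd Z C d R)"
      using dense zero_in_section_nbhd[OF \<open>subspace Z\<close> \<open>a \<in> A\<close>] by blast
    then obtain c where "c \<in> C" "dist c d < 2 * R"
      using close_point_if_zero_in_closure_section_nbhd \<open>0 < R\<close> by blast
    then show "\<exists>c\<in>C. dist c a < \<epsilon>"
      using \<open>dist d a < R\<close> \<open>R < \<epsilon> / 3\<close> dist_triangle[of c a d] by (intro bexI[of _ c]) auto
  qed
qed

lemma image_subset_closure_if_meets_slices:
  fixes Q :: "'a::real_normed_vector \<Rightarrow> 'b::real_normed_vector"
  assumes "linear Q" and "convex C" and "convex P" and "bounded (Q ` P)"
    and g: "\<And>k. bounded_linear (g k)" and \<delta>: "\<And>k. \<delta> k > 0" and determine: "slices_determine (Q ` P) g \<delta>"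
    and hit: "\<And>k. {x\<in>P. Q x \<in> slice (Q ` P) (g k) (\<delta> k)} \<noteq> {} \<Longrightarrow>
      C \<inter> {x\<in>P. Q x \<in> slice (Q ` P) (g k) (\<delta> k)} \<noteq> {}"
  shows "Q ` P \<subseteq> closure (Q ` (C \<inter> P))"
proof (cases "P = {}")
  case False
  show ?thesis
  proof (rule slices_determine_convex[OF determine])
    show "convex (Q ` (C \<inter> P))"
      using assms(1-3) by (simp add: convex_Int convex_linear_image)
    fix k
    have "bdd_above (g k ` Q ` P)"
      using assms(4) g by (simp add: bounded_imp_bdd_above bounded_linear_image)
    then have "slice (Q ` P) (g k) (\<delta> k) \<noteq> {}"
      using False \<delta> by (intro slice_nonempty) auto
    then have "{x\<in>P. Q x \<in> slice (Q ` P) (g k) (\<delta> k)} \<noteq> {}"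
      unfolding slice_def by blast
    then show "Q ` (C \<inter> P) \<inter> slice (Q ` P) (g k) (\<delta> k) \<noteq> {}"
      using hit by blast
  qed blast
qed simp

lemma section_nbhd_subset_closure:
  fixes Q :: "'a::real_normed_vector \<Rightarrow> 'b::real_normed_vector" and H :: "nat \<Rightarrow> 'a \<Rightarrow> real"
  assumes Q: "quotient_map Z Q" and "subspace Z" and "bounded A" and "C \<subseteq> A" and "convex C"
    and H: "\<And>m. bounded_linear (H m)" and \<eta>: "\<And>m. \<eta> m > 0"
    and determine: "slices_determine (section_nbhd Z A d R) H \<eta>"
    and approx: "\<And>m \<theta>. \<theta> \<in> \<rat> \<Longrightarrow>
      Q ` {x\<in>A. \<theta> + H m d < H m x} \<subseteq> closure (Q ` {x\<in>C. \<theta> + H m d < H m x})"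
  shows "section_nbhd Z A d R \<subseteq> closure (section_nbhd Z C d R)"
proof (cases "section_nbhd Z A d R = {}")
  case False
  show ?thesis
  proof (rule slices_determine_convex[OF determine])
    show "convex (section_nbhd Z C d R)"
      using \<open>subspace Z\<close> \<open>convex C\<close> by (rule convex_section_nbhd)
    show "section_nbhd Z C d R \<subseteq> section_nbhd Z A d R"
      using \<open>C \<subseteq> A\<close> by (rule section_nbhd_mono)
    fix m
    let ?s = "Sup (H m ` section_nbhd Z A d R)"
    have "bdd_above (H m ` section_nbhd Z A d R)"
      using bounded_section_nbhd[OF \<open>bounded A\<close>] H by (simp add: bounded_imp_bdd_above bounded_linear_image)
    then obtain z0 where z0: "z0 \<in> section_nbhd Z A d R" "?s - \<eta> m < H m z0"
      using slice_nonempty[OF False _ \<eta>] unfolding slice_def by blast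
    then obtain z where "z \<in> section_nbhd Z C d R" "H m z0 - (H m z0 - (?s - \<eta> m)) < H m z"
      using exists_section_nbhd_above[OF Q \<open>subspace Z\<close> H approx] by (meson diff_gt_0_iff_gt)
    moreover have "z \<in> section_nbhd Z A d R"
      using section_nbhd_mono[OF \<open>C \<subseteq> A\<close>] calculation(1) by blast
    ultimately show "section_nbhd Z C d R \<inter> slice (section_nbhd Z A d R) (H m) (\<eta> m) \<noteq> {}"
      unfolding slice_def by auto
  qed
qed simp

lemma slice_forced_Int:
  assumes "convex A" and "slice_forced A V"
  shows "slice_forced A (A \<inter> V)"
proof -
  obtain T where T: "finite T" "\<forall>(f, e)\<in>T. bounded_linear f \<and> e > 0"
    and hull: "\<forall>B\<subseteq>A. (\<forall>(f, e)\<in>T. B \<inter> slice A f e \<noteq> {}) \<longrightarrow> convex hull B \<inter> V \<noteq> {}"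
    using assms(2) unfolding slice_forced_def by auto
  have "convex hull B \<inter> (A \<inter> V) \<noteq> {}"
    if "B \<subseteq> A" "\<forall>(f, e)\<in>T. B \<inter> slice A f e \<noteq> {}" for B
  proof -
    have "convex hull B \<subseteq> A" using \<open>B \<subseteq> A\<close> \<open>convex A\<close> by (simp add: hull_minimal)
    moreover have "convex hull B \<inter> V \<noteq> {}" using hull that by simp
    ultimately show ?thesis by blast
  qed
  then show ?thesis
    unfolding slice_forced_def using T by auto
qed

lemma convex_superlevel:
  fixes h :: "'a::real_vector \<Rightarrow> real"
  assumes "convex A" and "linear h"
  shows "convex {x\<in>A. t < h x}"
proof -
  have "{x\<in>A. t < h x} = A \<inter> h -` {t<..}" by auto
  then show ?thesis using assms by (auto intro!: convex_Int convex_linear_vimage)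
qed

lemma slice_forced_quotient_slice:
  fixes Q :: "'a::real_normed_vector \<Rightarrow> 'b::real_normed_vector" and H :: "'a \<Rightarrow> real" and g :: "'b \<Rightarrow> real"
  assumes "convex A" and "bounded A" and "bounded_linear H" and "bounded_linear Q" and "bounded_linear g"
    and "x1 \<in> {x\<in>{x\<in>A. t < H x}. Q x \<in> slice (Q ` {x\<in>A. t < H x}) g \<delta>}"
  shows "slice_forced A {x\<in>{x\<in>A. t < H x}. Q x \<in> slice (Q ` {x\<in>A. t < H x}) g \<delta>}"
proof -
  define F where "F x = (H x, g (Q x))" for x
  define U where "U = {t<..} \<times> {Sup (g ` Q ` {x\<in>A. t < H x}) - \<delta><..}"
  have V_eq: "{x\<in>{x\<in>A. t < H x}. Q x \<in> slice (Q ` {x\<in>A. t < H x}) g \<delta>} = A \<inter> F -` U"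
    unfolding F_def U_def slice_def by auto
  have "slice_forced A (F -` U)"
  proof (rule slice_forced_vimage_open[OF \<open>bounded A\<close>])
    show "bounded_linear F"
      unfolding F_def by (intro bounded_linear_Pair assms(3) bounded_linear_compose[OF assms(5,4)])
    show "open U" unfolding U_def by (intro open_Times open_greaterThan)
    show "x1 \<in> A" "F x1 \<in> U" using assms(6) unfolding V_eq by blast+
  qed
  then show ?thesis
    unfolding V_eq by (rule slice_forced_Int[OF \<open>convex A\<close>])
qed

(* H d R, \<eta> d R: an SCD slice sequence of section_nbhd Z A d R, extended to X;
   g d R m \<theta>, \<delta> d R m \<theta>: one of the quotient image of upper d R m \<theta>. *)
locale quotient_slice_data =
  fixes Z :: "'a::real_normed_vector set" and Q :: "'a \<Rightarrow> 'b::real_normed_vector"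
    and D A :: "'a set"
    and H :: "'a \<Rightarrow> real \<Rightarrow> nat \<Rightarrow> 'a \<Rightarrow> real" and \<eta> :: "'a \<Rightarrow> real \<Rightarrow> nat \<Rightarrow> real"
    and g :: "'a \<Rightarrow> real \<Rightarrow> nat \<Rightarrow> real \<Rightarrow> nat \<Rightarrow> 'b \<Rightarrow> real"
    and \<delta> :: "'a \<Rightarrow> real \<Rightarrow> nat \<Rightarrow> real \<Rightarrow> nat \<Rightarrow> real"
  assumes quotient: "quotient_map Z Q" and subspace: "subspace Z"
    and countable_D: "countable D" and dense_D: "closure D = UNIV"
    and convex_A: "convex A" and bounded_A: "bounded A"
    and H: "bounded_linear (H d R m)" and \<eta>: "\<eta> d R m > 0"
    and determine_Z: "slices_determine (section_nbhd Z A d R) (H d R) (\<eta> d R)"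
    and g: "bounded_linear (g d R m \<theta> k)" and \<delta>: "\<delta> d R m \<theta> k > 0"
    and determine_Y: "slices_determine (Q ` {x\<in>A. \<theta> + H d R m d < H d R m x}) (g d R m \<theta>) (\<delta> d R m \<theta>)"
begin

definition upper :: "'a \<Rightarrow> real \<Rightarrow> nat \<Rightarrow> real \<Rightarrow> 'a set" where
  "upper d R m \<theta> = {x\<in>A. \<theta> + H d R m d < H d R m x}"

definition test :: "'a \<Rightarrow> real \<Rightarrow> nat \<Rightarrow> real \<Rightarrow> nat \<Rightarrow> 'a set" where
  "test d R m \<theta> k = {x\<in>upper d R m \<theta>. Q x \<in> slice (Q ` upper d R m \<theta>) (g d R m \<theta> k) (\<delta> d R m \<theta> k)}"

definition tests :: "'a set set" where
  "tests = {test d R m \<theta> k | d R m \<theta> k. d \<in> D \<and> R \<in> \<rat> \<and> \<theta> \<in> \<rat> \<and> test d R m \<theta> k \<noteq> {}}"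

lemma linear_Q: "linear Q"
  using quotient unfolding quotient_map_def by (simp add: bounded_linear.linear)

lemma convex_upper: "convex (upper d R m \<theta>)"
  unfolding upper_def using convex_A H by (simp add: convex_superlevel bounded_linear.linear)

lemma bounded_image_upper: "bounded (Q ` upper d R m \<theta>)"
  using quotient bounded_A unfolding quotient_map_def upper_def
  by (intro bounded_linear_image) (auto intro: bounded_subset)

lemma countable_tests: "countable tests"
proof -
  have "tests \<subseteq> (\<lambda>(d, R, m, \<theta>, k). test d R m \<theta> k) ` (D \<times> \<rat> \<times> UNIV \<times> \<rat> \<times> UNIV)"
  proof
    fix W assume "W \<in> tests"
    then obtain d R m \<theta> k where "W = test d R m \<theta> k" "d \<in> D" "R \<in> \<rat>" "\<theta> \<in> \<rat>"
      unfolding tests_def by blast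
    then show "W \<in> (\<lambda>(d, R, m, \<theta>, k). test d R m \<theta> k) ` (D \<times> \<rat> \<times> UNIV \<times> \<rat> \<times> UNIV)"
      by (intro rev_image_eqI[of "(d, R, m, \<theta>, k)"]) auto
  qed
  moreover have "countable (D \<times> \<rat> \<times> (UNIV :: nat set) \<times> \<rat> \<times> (UNIV :: nat set))"
    using countable_D by (simp add: countable_rat)
  ultimately show ?thesis
    by (rule countable_subset[OF _ countable_image])
qed

lemma slice_forced_tests:
  assumes "W \<in> tests"
  shows "slice_forced A W"
proof -
  obtain d R m \<theta> k x1 where W: "W = test d R m \<theta> k" and "x1 \<in> test d R m \<theta> k"
    using assms unfolding tests_def by blast
  have "bounded_linear Q" using quotient unfolding quotient_map_def by blast
  then show ?thesis
    using \<open>x1 \<in> test d R m \<theta> k\<close> unfolding W test_def upper_def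
    by (rule slice_forced_quotient_slice[OF convex_A bounded_A H _ g])
qed

lemma subset_closure_if_meets_tests:
  assumes "C \<subseteq> A" and "convex C" and meets: "\<forall>W\<in>tests. C \<inter> W \<noteq> {}"
  shows "A \<subseteq> closure C"
proof -
  have approx: "Q ` upper d R m \<theta> \<subseteq> closure (Q ` (C \<inter> upper d R m \<theta>))"
    if "d \<in> D" "R \<in> \<rat>" "\<theta> \<in> \<rat>" for d R m and \<theta> :: real
  proof (rule image_subset_closure_if_meets_slices[OF linear_Q \<open>convex C\<close> convex_upper bounded_image_upper
        g \<delta> determine_Y[folded upper_def]])
    fix k assume "{x\<in>upper d R m \<theta>. Q x \<in> slice (Q ` upper d R m \<theta>) (g d R m \<theta> k) (\<delta> d R m \<theta> k)} \<noteq> {}"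
    then have "test d R m \<theta> k \<in> tests"
      using that unfolding tests_def test_def by blast
    then show "C \<inter> {x\<in>upper d R m \<theta>. Q x \<in> slice (Q ` upper d R m \<theta>) (g d R m \<theta> k) (\<delta> d R m \<theta> k)} \<noteq> {}"
      using meets unfolding test_def by blast
  qed
  have "section_nbhd Z A d R \<subseteq> closure (section_nbhd Z C d R)" if "d \<in> D" "R \<in> \<rat>" for d R
  proof (rule section_nbhd_subset_closure[OF quotient subspace bounded_A \<open>C \<subseteq> A\<close> \<open>convex C\<close> H \<eta> determine_Z])
    fix m and \<theta> :: real assume "\<theta> \<in> \<rat>"
    have "C \<inter> {x\<in>A. \<theta> + H d R m d < H d R m x} = {x\<in>C. \<theta> + H d R m d < H d R m x}"
      using \<open>C \<subseteq> A\<close> by blast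
    then show "Q ` {x\<in>A. \<theta> + H d R m d < H d R m x} \<subseteq> closure (Q ` {x\<in>C. \<theta> + H d R m d < H d R m x})"
      using approx[OF that \<open>\<theta> \<in> \<rat>\<close>, of m] unfolding upper_def by argo
  qed
  then show ?thesis
    using subset_closure_if_section_nbhds_dense[OF subspace dense_D] by blast
qed

lemma SCD_set: "SCD_set_in UNIV A"
  using convex_A countable_tests slice_forced_tests subset_closure_if_meets_tests
  by (rule SCD_set_in_UNIV_if_slice_forced)

end

lemma SCD_set_in_UNIV_if_quotient:
  fixes Q :: "'a::real_normed_vector \<Rightarrow> 'b::real_normed_vector"
    and Z A D :: "'a set"
  assumes Q: "quotient_map Z Q" and "subspace Z"
    and SCD_Z: "\<And>E. E \<subseteq> Z \<Longrightarrow> convex E \<Longrightarrow> bounded E \<Longrightarrow> SCD_set_in Z E"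
    and SCD_Y: "\<And>E :: 'b set. convex E \<Longrightarrow> bounded E \<Longrightarrow> SCD_set_in UNIV E"
    and "countable D" and "closure D = UNIV" and "convex A" and "bounded A"
  shows "SCD_set_in UNIV A"
proof -
  have "bounded_linear Q" using Q unfolding quotient_map_def by blast
  have "\<forall>d R. \<exists>H \<eta>. (\<forall>m. bounded_linear (H m) \<and> \<eta> m > 0) \<and> slices_determine (section_nbhd Z A d R) H \<eta>"
  proof (intro allI)
    fix d R
    have "section_nbhd Z A d R \<subseteq> Z" unfolding section_nbhd_def by blast
    then have "SCD_set_in UNIV (section_nbhd Z A d R)"
      by (intro SCD_set_in_UNIV_if_subspace[OF \<open>subspace Z\<close>] SCD_Z convex_section_nbhd
          bounded_section_nbhd \<open>subspace Z\<close> \<open>convex A\<close> \<open>bounded A\<close>)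
    then show "\<exists>H \<eta>. (\<forall>m. bounded_linear (H m) \<and> \<eta> m > 0) \<and> slices_determine (section_nbhd Z A d R) H \<eta>"
      unfolding SCD_set_in_UNIV_iff .
  qed
  then obtain H \<eta> where H\<eta>: "\<forall>d R. (\<forall>m. bounded_linear (H d R m) \<and> \<eta> d R m > 0) \<and>
      slices_determine (section_nbhd Z A d R) (H d R) (\<eta> d R)"
    by (auto simp only: choice_iff)
  have "\<forall>d R m \<theta>. \<exists>g \<delta>. (\<forall>k. bounded_linear (g k) \<and> \<delta> k > 0) \<and>
      slices_determine (Q ` {x\<in>A. \<theta> + H d R m d < H d R m x}) g \<delta>"
  proof (intro allI)
    fix d R m \<theta>
    have "linear (H d R m)" using H\<eta> by (simp add: bounded_linear.linear)
    then have "SCD_set_in UNIV (Q ` {x\<in>A. \<theta> + H d R m d < H d R m x})"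
      using \<open>bounded_linear Q\<close> \<open>convex A\<close> \<open>bounded A\<close>
      by (intro SCD_Y convex_linear_image convex_superlevel bounded_linear_image)
        (auto simp: bounded_linear.linear intro: bounded_subset)
    then show "\<exists>g \<delta>. (\<forall>k. bounded_linear (g k) \<and> \<delta> k > 0) \<and>
        slices_determine (Q ` {x\<in>A. \<theta> + H d R m d < H d R m x}) g \<delta>"
      unfolding SCD_set_in_UNIV_iff .
  qed
  then obtain g \<delta> where g\<delta>: "\<forall>d R m \<theta>. (\<forall>k. bounded_linear (g d R m \<theta> k) \<and> \<delta> d R m \<theta> k > 0) \<and>
      slices_determine (Q ` {x\<in>A. \<theta> + H d R m d < H d R m x}) (g d R m \<theta>) (\<delta> d R m \<theta>)"
    by (auto simp only: choice_iff)
  interpret quotient_slice_data Z Q D A H \<eta> g \<delta>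
    by (intro quotient_slice_data.intro) (use assms H\<eta> g\<delta> in simp_all)
  show ?thesis by (rule SCD_set)
qed

theorem theorem3p6:
  fixes Z :: "'a::banach set" and Q :: "'a \<Rightarrow> 'b::banach"
  assumes "subspace Z" and "closed Z"
    and "bounded_linear Q" and "surj Q"
    and "\<forall>x. Q x = 0 \<longleftrightarrow> x \<in> Z"
    and "\<forall>y. norm y = Inf {norm x | x. Q x = y}"
    and "SCD_space_on Z"
    and "SCD_space TYPE('b)"
  shows "SCD_space TYPE('a)"
proof -
  have Q: "quotient_map Z Q"
    using assms(3-6) unfolding quotient_map_def by blast
  have sep_Z: "separable_space (top_of_set Z)"
    and SCD_Z: "\<And>E. E \<subseteq> Z \<Longrightarrow> convex E \<Longrightarrow> bounded E \<Longrightarrow> SCD_set_in Z E"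
    using assms(7) unfolding SCD_space_on_def by auto
  have sep_Y: "separable_space (top_of_set (UNIV :: 'b set))"
    and SCD_Y: "\<And>E :: 'b set. convex E \<Longrightarrow> bounded E \<Longrightarrow> SCD_set_in UNIV E"
    using assms(8) unfolding SCD_space_on_def by auto
  have separable: "separable_space (top_of_set (UNIV :: 'a set))"
    using separable_space_if_quotient_map[OF Q sep_Z sep_Y] .
  then obtain D :: "'a set" where "countable D" "closure D = UNIV"
    unfolding separable_space_def by (auto simp: closure_of_subtopology)
  then have "SCD_set_in UNIV A" if "convex A" "bounded A" for A :: "'a set"
    using SCD_set_in_UNIV_if_quotient[OF Q \<open>subspace Z\<close> SCD_Z SCD_Y] that by blast
  then show ?thesis
    using separable unfolding SCD_space_on_def by blast
qed

end
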